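(* Let $n\ge2$, let $\sigma,\delta,\tau\in\mathbb{C}$ with $|\sigma|=|\tau|>0$, fix a square root $\sqrt{\sigma\tau}$, and let $(\alpha,\beta)$ be one of the eight pairs $(0,\sqrt{\sigma\tau})$, $(\sqrt{\sigma\tau},0)$, $(0,-\sqrt{\sigma\tau})$, $(-\sqrt{\sigma\tau},0)$, $(\sqrt{\sigma\tau},-\sqrt{\sigma\tau})$, $(-\sqrt{\sigma\tau},\sqrt{\sigma\tau})$, $(\sqrt{\sigma\tau},\sqrt{\sigma\tau})$, $(-\sqrt{\sigma\tau},-\sqrt{\sigma\tau})$. Then $T_{\alpha,\beta}$ is normal, and consequently every eigenvalue $\lambda$ of $T_{\alpha,\beta}$ has condition number $\kappa(\lambda)=1$.
   Context: $T_{\alpha,\beta}$ denotes the $n\times n$ tridiagonal matrix with subdiagonal entries $\sigma$, superdiagonal entries $\tau$, and diagonal entries $\delta$ except the $(1,1)$ entry $\delta-\alpha$ and the $(n,n)$ entry $\delta-\beta$. For a simple eigenvalue $\lambda$ with right eigenvector $x$ ($Ax=\lambda x$) and left eigenvector $y$ ($y^HA=\lambda y^H$), the condition number is $\kappa(\lambda)=\|x\|_2\|y\|_2/|y^Hx|$. *)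

theory Defs
  imports "Jordan_Normal_Form.Schur_Decomposition"
begin

text \<open>The n x n tridiagonal matrix T_{alpha,beta}: subdiagonal sigma, superdiagonal tau,
  diagonal delta, except (1,1) entry delta - alpha and (n,n) entry delta - beta
  (0-based indices 0 and n-1).\<close>
definition tridiag_T :: "nat \<Rightarrow> complex \<Rightarrow> complex \<Rightarrow> complex \<Rightarrow> complex \<Rightarrow> complex \<Rightarrow> complex mat" where
  "tridiag_T n \<sigma> \<delta> \<tau> \<alpha> \<beta> = mat n n (\<lambda>(i, j).
     if i = j then (\<delta> - (if i = 0 then \<alpha> else 0) - (if i = n - 1 then \<beta> else 0))
     else if i = j + 1 then \<sigma>
     else if j = i + 1 then \<tau>
     else 0)"

definition normal_mat :: "complex mat \<Rightarrow> bool" where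
  "normal_mat A \<longleftrightarrow> A * mat_adjoint A = mat_adjoint A * A"

definition vnorm2 :: "complex vec \<Rightarrow> real" where
  "vnorm2 x = sqrt (\<Sum>i<dim_vec x. (cmod (x $ i))\<^sup>2)"

text \<open>Left eigenvector: y nonzero with y^H A = lambda y^H, written transposed.\<close>
definition left_eigenvector :: "complex mat \<Rightarrow> complex vec \<Rightarrow> complex \<Rightarrow> bool" where
  "left_eigenvector A y k \<longleftrightarrow> y \<in> carrier_vec (dim_row A) \<and> y \<noteq> 0\<^sub>v (dim_row A) \<and>
     transpose_mat A *\<^sub>v conjugate y = k \<cdot>\<^sub>v conjugate y"

text \<open>kappa = ||x|| ||y|| / |y^H x|, where y^H x = x \<bullet>c y.\<close>
definition cond_number :: "complex vec \<Rightarrow> complex vec \<Rightarrow> real" where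
  "cond_number x y = vnorm2 x * vnorm2 y / cmod (x \<bullet>c y)"

end

theory Submission
  imports Defs
begin

(* A tridiagonal matrix T with subdiagonal a, superdiagonal b and diagonal d is normal when
   |a| = |b| and (d i - d (i+1)) cnj a = cnj (d i - d (i+1)) b: these are exactly the conditions
   under which the pentadiagonal matrices T T^H and T^H T agree. For T_{alpha,beta} the diagonal
   differences are sums of 0, +-alpha, +-beta, and s^2 = sigma tau with |sigma| = |tau| gives
   s cnj sigma = cnj s tau.
   Normality turns every eigenvector x of T into an eigenvector of T^H, so cnj x is an
   eigenvector of T^T, as is cnj y for a left eigenvector y. Since the superdiagonal sigma of
   T^T is nonzero, its eigenvectors are determined by their first entry; hence y is a nonzero
   multiple of x and kappa = 1. *)

lemma mat_adjoint_dims [simp]: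
  "dim_row (mat_adjoint A) = dim_col A" "dim_col (mat_adjoint A) = dim_row A"
  by (simp_all add: mat_adjoint_def)

lemma mat_adjoint_index [simp]:
  "i < dim_col A \<Longrightarrow> j < dim_row A \<Longrightarrow> mat_adjoint A $$ (i, j) = conjugate (A $$ (j, i))"
  by (simp add: mat_adjoint_def mat_of_rows_index)

lemma mat_adjoint_carrier [simp]: "A \<in> carrier_mat n m \<Longrightarrow> mat_adjoint A \<in> carrier_mat m n"
  by auto

lemma mat_adjoint_adjoint [simp]: "mat_adjoint (mat_adjoint A) = A"
  by (rule eq_matI) auto

lemma conjugate_mat_adjoint_mult_vec:
  fixes A :: "'a :: conjugatable_field mat"
  assumes "A \<in> carrier_mat n m" and "v \<in> carrier_vec n"
  shows "conjugate (mat_adjoint A *\<^sub>v v) = transpose_mat A *\<^sub>v conjugate v"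
proof (rule eq_vecI)
  fix i assume "i < dim_vec (transpose_mat A *\<^sub>v conjugate v)"
  with assms have i: "i < m" by simp
  have "conjugate (row (mat_adjoint A) i \<bullet> v) = conjugate (row (mat_adjoint A) i) \<bullet> conjugate v"
    using assms i by (intro conjugate_sprod_vec[of _ n]) auto
  also have "conjugate (row (mat_adjoint A) i) = col A i"
    using assms i by (intro eq_vecI) auto
  finally show "conjugate (mat_adjoint A *\<^sub>v v) $ i = (transpose_mat A *\<^sub>v conjugate v) $ i"
    using assms i by simp
qed (use assms in simp)

lemma mat_adjoint_cscalar_prod:
  fixes A :: "'a :: conjugatable_field mat"
  assumes "A \<in> carrier_mat n m" and "u \<in> carrier_vec m" and "v \<in> carrier_vec n"
  shows "(A *\<^sub>v u) \<bullet>c v = u \<bullet>c (mat_adjoint A *\<^sub>v v)"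
proof -
  have "(A *\<^sub>v u) \<bullet>c v = conjugate v \<bullet> (A *\<^sub>v u)"
    using assms by (intro comm_scalar_prod[of _ n]) auto
  also have "\<dots> = (transpose_mat A *\<^sub>v conjugate v) \<bullet> u"
    using assms by (intro transpose_vec_mult_scalar[symmetric]) auto
  also have "\<dots> = u \<bullet>c (mat_adjoint A *\<^sub>v v)"
    using assms by (simp add: conjugate_mat_adjoint_mult_vec comm_scalar_prod[of _ m])
  finally show ?thesis .
qed

lemma normal_mat_kernel_adjoint:
  assumes A: "A \<in> carrier_mat n n" and "normal_mat A"
    and x: "x \<in> carrier_vec n" and Ax: "A *\<^sub>v x = 0\<^sub>v n"
  shows "mat_adjoint A *\<^sub>v x = 0\<^sub>v n"
proof -
  define w where "w = mat_adjoint A *\<^sub>v x"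
  have w: "w \<in> carrier_vec n"
    unfolding w_def using A x by (intro mult_mat_vec_carrier) auto
  have "A *\<^sub>v w = (mat_adjoint A * A) *\<^sub>v x"
    using assms by (simp add: w_def normal_mat_def assoc_mult_mat_vec[symmetric, of _ n n _ n])
  also have "\<dots> = mat_adjoint A *\<^sub>v 0\<^sub>v n"
    using A x Ax by (simp add: assoc_mult_mat_vec[of _ n n _ n])
  also have "\<dots> = 0\<^sub>v n"
    using A by (intro eq_vecI) auto
  finally have "w \<bullet>c w = x \<bullet>c 0\<^sub>v n"
    using mat_adjoint_cscalar_prod[of "mat_adjoint A" n n x w] A x w by (simp add: w_def)
  then have "w \<bullet>c w = 0" using x by simp
  then show ?thesis using w by (simp add: w_def)
qed

lemma cscalar_prod_self_vnorm2: "x \<bullet>c x = (complex_of_real (vnorm2 x))\<^sup>2"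
proof -
  have "x \<bullet>c x = (\<Sum>i<dim_vec x. complex_of_real ((cmod (x $ i))\<^sup>2))"
    by (simp add: scalar_prod_def atLeast0LessThan complex_norm_square del: of_real_power)
  also have "\<dots> = (complex_of_real (vnorm2 x))\<^sup>2"
    by (simp add: vnorm2_def sum_nonneg flip: of_real_power)
  finally show ?thesis .
qed

lemma vnorm2_smult: "vnorm2 (c \<cdot>\<^sub>v x) = cmod c * vnorm2 x"
  by (simp add: vnorm2_def norm_mult power_mult_distrib sum_distrib_left[symmetric] real_sqrt_mult)

lemma cond_number_smult:
  assumes "x \<in> carrier_vec n" and "x \<noteq> 0\<^sub>v n" and "c \<noteq> 0"
  shows "cond_number x (c \<cdot>\<^sub>v x) = 1"
proof -
  have "vnorm2 x \<noteq> 0"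
    using assms(1,2) cscalar_prod_self_vnorm2[of x] conjugate_square_eq_0_vec[OF assms(1)] by auto
  moreover have "x \<bullet>c (c \<cdot>\<^sub>v x) = cnj c * (x \<bullet>c x)"
    by (simp add: conjugate_smult_vec)
  ultimately show ?thesis
    using assms(3)
    by (simp add: cond_number_def cscalar_prod_self_vnorm2 vnorm2_smult norm_mult power2_eq_square)
qed

lemma sum_three_neighbours:
  fixes f :: "nat \<Rightarrow> 'a :: comm_monoid_add"
  assumes "i < n" and "\<And>k. k < n \<Longrightarrow> k + 1 \<noteq> i \<Longrightarrow> k \<noteq> i \<Longrightarrow> k \<noteq> i + 1 \<Longrightarrow> f k = 0"
  shows "(\<Sum>k\<in>{0..<n}. f k) =
    (if 0 < i then f (i - 1) else 0) + f i + (if i + 1 < n then f (i + 1) else 0)"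
proof -
  have "(\<Sum>k\<in>{0..<n}. f k) = (\<Sum>k\<in>{0..<n}. (if 0 < i \<and> k = i - 1 then f (i - 1) else 0)
      + (if k = i then f i else 0) + (if k = i + 1 then f (i + 1) else 0))"
    using assms by (intro sum.cong refl) (cases i; auto)
  also have "\<dots> = (if 0 < i then f (i - 1) else 0) + f i + (if i + 1 < n then f (i + 1) else 0)"
    using assms(1) by (auto simp: sum.distrib)
  finally show ?thesis .
qed

definition tridiag :: "nat \<Rightarrow> 'a \<Rightarrow> 'a \<Rightarrow> (nat \<Rightarrow> 'a) \<Rightarrow> 'a :: zero mat" where
  "tridiag n a b d = mat n n (\<lambda>(i, j).
     if i = j then d i else if i = j + 1 then a else if j = i + 1 then b else 0)"

lemma tridiag_carrier [simp]: "tridiag n a b d \<in> carrier_mat n n"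
  and tridiag_dims [simp]: "dim_row (tridiag n a b d) = n" "dim_col (tridiag n a b d) = n"
  by (simp_all add: tridiag_def)

lemma tridiag_index [simp]:
  "i < n \<Longrightarrow> j < n \<Longrightarrow> tridiag n a b d $$ (i, j) =
     (if i = j then d i else if i = j + 1 then a else if j = i + 1 then b else 0)"
  by (simp add: tridiag_def)

lemma transpose_tridiag: "transpose_mat (tridiag n a b d) = tridiag n b a d"
  by (rule eq_matI) auto

lemma mat_adjoint_tridiag:
  "mat_adjoint (tridiag n a b d) = tridiag n (conjugate b) (conjugate a) (\<lambda>i. conjugate (d i))"
  by (rule eq_matI) auto

lemma tridiag_mult_vec_index:
  fixes v :: "'a :: comm_semiring_0 vec"
  assumes "v \<in> carrier_vec n" and "i < n"
  shows "(tridiag n a b d *\<^sub>v v) $ i =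
    (if 0 < i then a * v $ (i - 1) else 0) + d i * v $ i + (if i + 1 < n then b * v $ (i + 1) else 0)"
  using assms by (simp add: scalar_prod_def sum_three_neighbours[OF \<open>i < n\<close>])
    (cases i, auto)

lemma tridiag_mult_index:
  fixes B :: "'a :: comm_semiring_0 mat"
  assumes "B \<in> carrier_mat n m" and "i < n" and "j < m"
  shows "(tridiag n a b d * B) $$ (i, j) =
    (if 0 < i then a * B $$ (i - 1, j) else 0) + d i * B $$ (i, j)
    + (if i + 1 < n then b * B $$ (i + 1, j) else 0)"
proof -
  have "(tridiag n a b d * B) $$ (i, j) = (tridiag n a b d *\<^sub>v col B j) $ i"
    using assms by simp
  also have "\<dots> = (if 0 < i then a * B $$ (i - 1, j) else 0) + d i * B $$ (i, j)
    + (if i + 1 < n then b * B $$ (i + 1, j) else 0)"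
    using assms by (subst tridiag_mult_vec_index[of _ n]) auto
  finally show ?thesis .
qed

lemma tridiag_mult_tridiag_index:
  fixes a :: "'a :: comm_semiring_0"
  assumes i: "i < n" and j: "j < n"
  shows "(tridiag n a b d * tridiag n a' b' d') $$ (i, j) =
    (if j = i then (if 0 < i then a * b' else 0) + d i * d' i + (if i + 1 < n then b * a' else 0)
     else if j = i + 1 then d i * b' + b * d' j
     else if i = j + 1 then a * d' j + d i * a'
     else if j = i + 2 then b * b'
     else if i = j + 2 then a * a'
     else 0)"
  unfolding tridiag_mult_index[OF tridiag_carrier i j]
  using i j by (cases i) auto

lemma normal_tridiag:
  fixes a b :: complex
  assumes ab: "cmod a = cmod b"
    and diag: "\<And>i. i + 1 < n \<Longrightarrow> (d i - d (i + 1)) * cnj a = cnj (d i - d (i + 1)) * b"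
  shows "normal_mat (tridiag n a b d)"
proof -
  let ?T = "tridiag n a b d" and ?H = "tridiag n (cnj b) (cnj a) (\<lambda>i. cnj (d i))"
  have ab': "a * cnj a = b * cnj b"
    using ab by (simp add: complex_norm_square[symmetric])
  have upper: "d i * cnj a + b * cnj (d (i + 1)) = cnj (d i) * b + cnj a * d (i + 1)"
    and lower: "a * cnj (d i) + d (i + 1) * cnj b = cnj b * d i + cnj (d (i + 1)) * a"
    if "i + 1 < n" for i
    using diag[OF that] arg_cong[OF diag[OF that], of cnj] by (simp_all add: algebra_simps)
  have "?T * ?H = ?H * ?T"
  proof (rule eq_matI)
    fix i j assume "i < dim_row (?H * ?T)" "j < dim_col (?H * ?T)"
    then have i: "i < n" and j: "j < n" by auto
    consider "j = i" | "j = i + 1" | "i = j + 1" | "j \<noteq> i" "j \<noteq> i + 1" "i \<noteq> j + 1"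
      by linarith
    then show "(?T * ?H) $$ (i, j) = (?H * ?T) $$ (i, j)"
      unfolding tridiag_mult_tridiag_index[OF i j]
      by cases (use ab' upper[of i] lower[of j] i j in \<open>simp_all add: mult.commute\<close>)
  qed auto
  then show ?thesis
    by (simp add: normal_mat_def mat_adjoint_tridiag)
qed

lemma tridiag_eigen_iff_shifted_kernel:
  fixes v :: "'a :: comm_ring vec"
  assumes "v \<in> carrier_vec n"
  shows "tridiag n a b d *\<^sub>v v = c \<cdot>\<^sub>v v \<longleftrightarrow> tridiag n a b (\<lambda>i. d i - c) *\<^sub>v v = 0\<^sub>v n"
  using assms
  by (auto simp: vec_eq_iff tridiag_mult_vec_index algebra_simps simp del: index_mult_mat_vec)

lemma normal_tridiag_adjoint_eigenvector:
  fixes a b :: complex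
  assumes ab: "cmod a = cmod b"
    and diag: "\<And>i. i + 1 < n \<Longrightarrow> (d i - d (i + 1)) * cnj a = cnj (d i - d (i + 1)) * b"
    and v: "v \<in> carrier_vec n" and ev: "tridiag n a b d *\<^sub>v v = k \<cdot>\<^sub>v v"
  shows "mat_adjoint (tridiag n a b d) *\<^sub>v v = cnj k \<cdot>\<^sub>v v"
proof -
  let ?S = "tridiag n a b (\<lambda>i. d i - k)"
  (* the criterion only involves differences of diagonal entries, so it survives the shift by k *)
  have "normal_mat ?S"
    by (rule normal_tridiag) (use ab diag in simp_all)
  moreover have "?S *\<^sub>v v = 0\<^sub>v n"
    using ev v by (simp add: tridiag_eigen_iff_shifted_kernel)
  ultimately have "mat_adjoint ?S *\<^sub>v v = 0\<^sub>v n"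
    using v by (intro normal_mat_kernel_adjoint) auto
  then show ?thesis
    using v by (simp add: mat_adjoint_tridiag tridiag_eigen_iff_shifted_kernel)
qed

lemma tridiag_kernel_eq_zero:
  fixes v :: "'a :: idom vec"
  assumes b: "b \<noteq> 0" and v: "v \<in> carrier_vec n" and kernel: "tridiag n a b d *\<^sub>v v = 0\<^sub>v n"
    and v0: "v $ 0 = 0"
  shows "v = 0\<^sub>v n"
proof -
  have "v $ k = 0" if "k < n" for k
    using that
  proof (induction k rule: less_induct)
    case (less k)
    show ?case
    proof (cases k)
      case 0
      then show ?thesis using v0 by simp
    next
      case (Suc m)
      have "v $ (m - 1) = 0" and "v $ m = 0"
        using less Suc by simp_all
      moreover have "(tridiag n a b d *\<^sub>v v) $ m = 0"
        using kernel less.prems Suc by simp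
      ultimately have "b * v $ k = 0"
        using less.prems Suc v
        by (simp add: tridiag_mult_vec_index split: if_split_asm del: index_mult_mat_vec)
      then show ?thesis using b by simp
    qed
  qed
  then show ?thesis
    using v by (intro eq_vecI) auto
qed

lemma tridiag_eigenvectors_proportional:
  fixes d :: "nat \<Rightarrow> 'a :: field"
  assumes b: "b \<noteq> 0" and x: "eigenvector (tridiag n a b d) x k"
    and y: "y \<in> carrier_vec n" and ev_y: "tridiag n a b d *\<^sub>v y = k \<cdot>\<^sub>v y"
  shows "y = (y $ 0 / x $ 0) \<cdot>\<^sub>v x"
proof -
  let ?S = "tridiag n a b (\<lambda>i. d i - k)"
  define c where "c = y $ 0 / x $ 0"
  have x_carrier: "x \<in> carrier_vec n" and "x \<noteq> 0\<^sub>v n"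
    using x by (auto simp: eigenvector_def)
  have Sx: "?S *\<^sub>v x = 0\<^sub>v n" and Sy: "?S *\<^sub>v y = 0\<^sub>v n"
    using x y ev_y by (auto simp: eigenvector_def tridiag_eigen_iff_shifted_kernel[symmetric])
  have "x $ 0 \<noteq> 0"
    using tridiag_kernel_eq_zero[OF b x_carrier Sx] \<open>x \<noteq> 0\<^sub>v n\<close> by blast
  then have "n > 0" and "(y - c \<cdot>\<^sub>v x) $ 0 = 0"
    using \<open>x \<noteq> 0\<^sub>v n\<close> x_carrier y by (auto simp: c_def)
  moreover have "?S *\<^sub>v (y - c \<cdot>\<^sub>v x) = 0\<^sub>v n"
    using x_carrier y Sx Sy
    by (simp add: mult_minus_distrib_mat_vec[of _ n n] mult_mat_vec[of _ n n]) (simp add: vec_eq_iff)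
  ultimately have "y - c \<cdot>\<^sub>v x = 0\<^sub>v n"
    using x_carrier y tridiag_kernel_eq_zero[OF b, of "y - c \<cdot>\<^sub>v x" n] by simp
  then have "(y - c \<cdot>\<^sub>v x) $ i = 0" if "i < n" for i
    using that by simp
  then have "y $ i = c * x $ i" if "i < n" for i
    using that x_carrier y by fastforce
  then show ?thesis
    using x_carrier y unfolding c_def[symmetric] by (intro eq_vecI) auto
qed

lemma normal_tridiag_left_eigenvector:
  fixes a b :: complex
  assumes ab: "cmod a = cmod b"
    and diag: "\<And>i. i + 1 < n \<Longrightarrow> (d i - d (i + 1)) * cnj a = cnj (d i - d (i + 1)) * b"
    and a: "a \<noteq> 0"
    and x: "eigenvector (tridiag n a b d) x k" and y: "left_eigenvector (tridiag n a b d) y k"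
  shows "\<exists>c. c \<noteq> 0 \<and> y = c \<cdot>\<^sub>v x"
proof -
  have x_carrier: "x \<in> carrier_vec n" and "x \<noteq> 0\<^sub>v n"
    and "tridiag n a b d *\<^sub>v x = k \<cdot>\<^sub>v x"
    using x by (auto simp: eigenvector_def)
  then have "mat_adjoint (tridiag n a b d) *\<^sub>v x = cnj k \<cdot>\<^sub>v x"
    by (intro normal_tridiag_adjoint_eigenvector[of a b n d, OF ab diag])
  from arg_cong[OF this, of conjugate]
  have "tridiag n b a d *\<^sub>v conjugate x = k \<cdot>\<^sub>v conjugate x"
    using x_carrier
    by (simp add: conjugate_mat_adjoint_mult_vec[of _ n n] conjugate_smult_vec transpose_tridiag)
  then have "eigenvector (tridiag n b a d) (conjugate x) k"
    using x_carrier \<open>x \<noteq> 0\<^sub>v n\<close> by (simp add: eigenvector_def)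
  moreover have "conjugate y \<in> carrier_vec n" and "y \<noteq> 0\<^sub>v n"
    and "tridiag n b a d *\<^sub>v conjugate y = k \<cdot>\<^sub>v conjugate y"
    using y by (auto simp: left_eigenvector_def transpose_tridiag)
  ultimately obtain c where "conjugate y = c \<cdot>\<^sub>v conjugate x"
    using tridiag_eigenvectors_proportional[OF a] by blast
  then have "conjugate (conjugate y) = conjugate (c \<cdot>\<^sub>v conjugate x)"
    by (rule arg_cong)
  then have "y = cnj c \<cdot>\<^sub>v x"
    by (simp only: conjugate_smult_vec conjugate_id conjugate_complex_def)
  moreover have "cnj c \<noteq> 0"
  proof
    assume "cnj c = 0"
    then have "y = 0\<^sub>v n"
      using \<open>y = cnj c \<cdot>\<^sub>v x\<close> x_carrier by auto
    then show False
      using \<open>y \<noteq> 0\<^sub>v n\<close> by contradiction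
  qed
  ultimately show ?thesis by blast
qed

lemma root_prod_mult_cnj_eq:
  fixes \<sigma> \<tau> s :: complex
  assumes "cmod \<sigma> = cmod \<tau>" and "\<sigma> \<noteq> 0" and "s\<^sup>2 = \<sigma> * \<tau>"
  shows "s * cnj \<sigma> = cnj s * \<tau>"
proof -
  have "\<tau> \<noteq> 0" using assms(1,2) by auto
  then have "s \<noteq> 0" using assms(2,3) by auto
  have "(cmod s)\<^sup>2 = cmod \<sigma> * cmod \<tau>"
    using arg_cong[OF assms(3), of cmod] by (simp add: norm_mult norm_power)
  then have "(cmod s)\<^sup>2 = (cmod \<sigma>)\<^sup>2"
    using assms(1) by (simp add: power2_eq_square)
  then have "s * (s * cnj \<sigma>) = s * (cnj s * \<tau>)"
    using assms(3) complex_norm_square[of s] complex_norm_square[of \<sigma>]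
    by (simp add: power2_eq_square algebra_simps)
  then show ?thesis using \<open>s \<noteq> 0\<close> by simp
qed

theorem proposition3:
  fixes n :: nat and \<sigma> \<delta> \<tau> s \<alpha> \<beta> :: complex
  assumes "n \<ge> 2"
    and "cmod \<sigma> = cmod \<tau>" and "cmod \<sigma> > 0"
    and "s\<^sup>2 = \<sigma> * \<tau>"
    and "(\<alpha>, \<beta>) \<in> {(0, s), (s, 0), (0, -s), (-s, 0), (s, -s), (-s, s), (s, s), (-s, -s)}"
  shows "normal_mat (tridiag_T n \<sigma> \<delta> \<tau> \<alpha> \<beta>)
    \<and> (\<forall>lam x y. eigenvalue (tridiag_T n \<sigma> \<delta> \<tau> \<alpha> \<beta>) lam
         \<longrightarrow> eigenvector (tridiag_T n \<sigma> \<delta> \<tau> \<alpha> \<beta>) x lam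
         \<longrightarrow> left_eigenvector (tridiag_T n \<sigma> \<delta> \<tau> \<alpha> \<beta>) y lam
         \<longrightarrow> cond_number x y = 1)"
proof -
  define D where "D i = \<delta> - (if i = 0 then \<alpha> else 0) - (if i = n - 1 then \<beta> else 0)" for i
  have T: "tridiag_T n \<sigma> \<delta> \<tau> \<alpha> \<beta> = tridiag n \<sigma> \<tau> D"
    unfolding tridiag_T_def tridiag_def D_def by simp
  have "\<sigma> \<noteq> 0" using assms(3) by auto
  have "s * cnj \<sigma> = cnj s * \<tau>"
    using root_prod_mult_cnj_eq[OF assms(2) \<open>\<sigma> \<noteq> 0\<close> assms(4)] .
  then have "\<alpha> * cnj \<sigma> = cnj \<alpha> * \<tau>" and "\<beta> * cnj \<sigma> = cnj \<beta> * \<tau>"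
    using assms(5) by auto
  then have diag: "(D i - D (i + 1)) * cnj \<sigma> = cnj (D i - D (i + 1)) * \<tau>" for i
    by (simp add: D_def algebra_simps)
  have "normal_mat (tridiag n \<sigma> \<tau> D)"
    using normal_tridiag[of \<sigma> \<tau> n D, OF assms(2) diag] .
  moreover have "cond_number x y = 1"
    if x: "eigenvector (tridiag n \<sigma> \<tau> D) x lam" and y: "left_eigenvector (tridiag n \<sigma> \<tau> D) y lam"
    for lam x y
  proof -
    obtain c where "c \<noteq> 0" and "y = c \<cdot>\<^sub>v x"
      using normal_tridiag_left_eigenvector[of \<sigma> \<tau> n D, OF assms(2) diag \<open>\<sigma> \<noteq> 0\<close> x y] by blast
    then show ?thesis
      using x cond_number_smult[of x n c] by (simp add: eigenvector_def)
  qed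
  ultimately show ?thesis
    unfolding T by blast
qed

end
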